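(* Let $G$ be a finite $d$-regular graph and let $k<d$ be a positive integer. Let $S=(v_1,\ldots,v_m)$, $m\geq1$, be a maximal $k$-$L$-sequence of $G$ (no vertex can be appended to the end of $S$ to obtain a longer $k$-$L$-sequence), and let $x=v_m$ be its last vertex. Then there exists a vertex $y\neq x$, $y\in N(x)$, such that $y$ lies in the open neighborhoods $N(v_j)$ of exactly $k-1$ of the vertices $v_1,\ldots,v_{m-1}$ (i.e., $x$ footprints $y$ for the $k$-th time).
   Context: For a vertex $v$, $N(v)$ is its open neighborhood and $N[v]=N(v)\cup\{v\}$. A sequence $S=(v_1,\ldots,v_m)$ of distinct vertices is a $k$-$L$-sequence if for each $i$ there is $u_i\in N[v_i]$ such that the number of indices $j<i$ with $u_i\in N(v_j)$ is less than $k$. A vertex $v_i$ of $S$ is said to footprint $u$ for the $r$-th time if $u\in N[v_i]$ and $u$ lies in $N(v_j)$ for exactly $r-1$ indices $j<i$. *)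

theory Defs
  imports Main
begin

definition simple_graph :: "'a set \<Rightarrow> ('a \<Rightarrow> 'a \<Rightarrow> bool) \<Rightarrow> bool" where
  "simple_graph V E \<longleftrightarrow> finite V \<and> (\<forall>u v. E u v \<longrightarrow> u \<in> V \<and> v \<in> V)
     \<and> (\<forall>u v. E u v \<longrightarrow> E v u) \<and> (\<forall>u. \<not> E u u)"

definition open_nbhd :: "'a set \<Rightarrow> ('a \<Rightarrow> 'a \<Rightarrow> bool) \<Rightarrow> 'a \<Rightarrow> 'a set" where
  "open_nbhd V E v = {u \<in> V. E v u}"

definition closed_nbhd :: "'a set \<Rightarrow> ('a \<Rightarrow> 'a \<Rightarrow> bool) \<Rightarrow> 'a \<Rightarrow> 'a set" where
  "closed_nbhd V E v = insert v (open_nbhd V E v)"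

definition regular :: "'a set \<Rightarrow> ('a \<Rightarrow> 'a \<Rightarrow> bool) \<Rightarrow> nat \<Rightarrow> bool" where
  "regular V E d \<longleftrightarrow> (\<forall>v\<in>V. card (open_nbhd V E v) = d)"

definition prior_count :: "'a set \<Rightarrow> ('a \<Rightarrow> 'a \<Rightarrow> bool) \<Rightarrow> 'a list \<Rightarrow> nat \<Rightarrow> 'a \<Rightarrow> nat" where
  "prior_count V E S i u = card {j. j < i \<and> u \<in> open_nbhd V E (S ! j)}"

definition kL_sequence :: "'a set \<Rightarrow> ('a \<Rightarrow> 'a \<Rightarrow> bool) \<Rightarrow> nat \<Rightarrow> 'a list \<Rightarrow> bool" where
  "kL_sequence V E k S \<longleftrightarrow> distinct S \<and> set S \<subseteq> V \<and>
     (\<forall>i < length S. \<exists>u \<in> closed_nbhd V E (S ! i). prior_count V E S i u < k)"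

definition maximal_kL_sequence :: "'a set \<Rightarrow> ('a \<Rightarrow> 'a \<Rightarrow> bool) \<Rightarrow> nat \<Rightarrow> 'a list \<Rightarrow> bool" where
  "maximal_kL_sequence V E k S \<longleftrightarrow> kL_sequence V E k S \<and>
     (\<forall>v \<in> V. \<not> kL_sequence V E k (S @ [v]))"

end

theory Submission
  imports Defs
begin

text \<open>If some vertex u were footprinted fewer than k < d times by the whole of S, then fewer than d
  of its d neighbours lie in S, and appending a neighbour outside S (which footprints u) would
  extend S. Hence in a maximal sequence every vertex is footprinted at least k times. The witness
  u \<in> N[x] of the last vertex x was footprinted fewer than k times before x, so x itself must
  footprint u, which forces u \<in> N(x) and exactly k - 1 earlier footprints.\<close>

lemma prior_count_append:
  assumes "i \<le> length S"
  shows "prior_count V E (S @ [v]) i u = prior_count V E S i u"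
proof -
  have "{j. j < i \<and> u \<in> open_nbhd V E ((S @ [v]) ! j)} = {j. j < i \<and> u \<in> open_nbhd V E (S ! j)}"
    using assms by (auto simp: nth_append)
  then show ?thesis by (simp add: prior_count_def)
qed

lemma prior_count_Suc:
  "prior_count V E S (Suc i) u =
     prior_count V E S i u + (if u \<in> open_nbhd V E (S ! i) then 1 else 0)"
proof -
  let ?A = "{j. j < i \<and> u \<in> open_nbhd V E (S ! j)}"
  have "{j. j < Suc i \<and> u \<in> open_nbhd V E (S ! j)} =
          (if u \<in> open_nbhd V E (S ! i) then insert i ?A else ?A)"
    by (auto simp: less_Suc_eq)
  then show ?thesis by (simp add: prior_count_def)
qed

lemma card_open_nbhd_inter_set_le_prior_count:
  assumes "simple_graph V E"
  shows "card (open_nbhd V E u \<inter> set S) \<le> prior_count V E S (length S) u"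
proof -
  let ?J = "{j. j < length S \<and> u \<in> open_nbhd V E (S ! j)}"
  have "open_nbhd V E u \<inter> set S \<subseteq> (!) S ` ?J"
  proof
    fix w assume w: "w \<in> open_nbhd V E u \<inter> set S"
    then obtain j where "j < length S" "S ! j = w" by (auto simp: in_set_conv_nth)
    moreover have "u \<in> open_nbhd V E w"
      using w assms by (auto simp: open_nbhd_def simple_graph_def)
    ultimately show "w \<in> (!) S ` ?J" by force
  qed
  then have "card (open_nbhd V E u \<inter> set S) \<le> card ((!) S ` ?J)"
    by (intro card_mono) auto
  also have "\<dots> \<le> prior_count V E S (length S) u"
    unfolding prior_count_def by (rule card_image_le) simp
  finally show ?thesis .
qed

lemma open_nbhd_not_subset_set:
  assumes "simple_graph V E" and "regular V E d" and "u \<in> V"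
    and "prior_count V E S (length S) u < d"
  shows "\<not> open_nbhd V E u \<subseteq> set S"
proof
  assume "open_nbhd V E u \<subseteq> set S"
  then have "d \<le> card (open_nbhd V E u \<inter> set S)"
    using assms(2,3) by (simp add: regular_def Int_absorb2)
  then show False
    using card_open_nbhd_inter_set_le_prior_count[OF assms(1), of u S] assms(4) by simp
qed

lemma kL_sequence_snoc:
  assumes "kL_sequence V E k S" and "v \<in> V" and "v \<notin> set S"
    and "u \<in> closed_nbhd V E v" and "prior_count V E S (length S) u < k"
  shows "kL_sequence V E k (S @ [v])"
  unfolding kL_sequence_def
proof (intro conjI allI impI)
  show "distinct (S @ [v])" and "set (S @ [v]) \<subseteq> V"
    using assms(1-3) by (auto simp: kL_sequence_def)
  fix i assume "i < length (S @ [v])"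
  then consider "i < length S" | "i = length S" by fastforce
  then show "\<exists>w\<in>closed_nbhd V E ((S @ [v]) ! i). prior_count V E (S @ [v]) i w < k"
  proof cases
    case 1
    then obtain w where "w \<in> closed_nbhd V E (S ! i)" "prior_count V E S i w < k"
      using assms(1) by (auto simp: kL_sequence_def)
    with 1 show ?thesis by (auto simp: nth_append prior_count_append)
  next
    case 2
    with assms(4,5) show ?thesis by (auto simp: prior_count_append)
  qed
qed

lemma maximal_kL_sequence_footprints_every_vertex:
  assumes "simple_graph V E" and "regular V E d" and "k < d"
    and "maximal_kL_sequence V E k S" and "u \<in> V"
  shows "k \<le> prior_count V E S (length S) u"
proof (rule ccontr)
  assume few: "\<not> k \<le> prior_count V E S (length S) u"
  then obtain v where v: "v \<in> open_nbhd V E u" "v \<notin> set S"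
    using open_nbhd_not_subset_set[OF assms(1,2,5), of S] assms(3) by auto
  then have "v \<in> V" and "u \<in> closed_nbhd V E v"
    using assms(1,5) by (auto simp: open_nbhd_def closed_nbhd_def simple_graph_def)
  with v few assms(4) show False
    using kL_sequence_snoc[of V E k S v u] by (auto simp: maximal_kL_sequence_def)
qed

theorem mainTheorem10:
  fixes V :: "'a set" and E :: "'a \<Rightarrow> 'a \<Rightarrow> bool" and d k :: nat and S :: "'a list"
  assumes "simple_graph V E"
    and "regular V E d"
    and "0 < k" and "k < d"
    and "maximal_kL_sequence V E k S"
    and "length S \<ge> 1"
  shows "\<exists>y. y \<noteq> last S \<and> y \<in> open_nbhd V E (last S) \<and>
           prior_count V E S (length S - 1) y = k - 1"
proof -
  define m where "m = length S - 1"
  have len: "length S = Suc m"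
    using assms(6) by (simp add: m_def)
  then have last: "last S = S ! m"
    by (metis last_conv_nth list.size(3) m_def nat.distinct(1))
  have kl: "kL_sequence V E k S"
    using assms(5) by (simp add: maximal_kL_sequence_def)
  then obtain u where u: "u \<in> closed_nbhd V E (S ! m)" "prior_count V E S m u < k"
    by (auto simp: kL_sequence_def len)
  have "S ! m \<in> V" using kl len by (auto simp: kL_sequence_def)
  then have "u \<in> V" using u(1) by (auto simp: closed_nbhd_def open_nbhd_def)
  then have "k \<le> prior_count V E S m u + (if u \<in> open_nbhd V E (S ! m) then 1 else 0)"
    using maximal_kL_sequence_footprints_every_vertex[OF assms(1,2,4,5)]
    by (metis len prior_count_Suc)
  then have "u \<in> open_nbhd V E (S ! m)" and "prior_count V E S m u = k - 1"
    using u(2) by (auto split: if_splits)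
  moreover have "u \<noteq> S ! m"
    using calculation(1) assms(1) by (auto simp: open_nbhd_def simple_graph_def)
  ultimately show ?thesis by (auto simp: last m_def)
qed

end
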